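(* Let $\mathcal{A}=\{\mathbf{A},\mathbf{B},\mathbf{C},\mathbf{D}\}$, let $n\ge 1$, and let $H$ be an arbitrary (simple) graph on the vertex set $\{1,\dots,n\}$. (a) Let $\mathcal{R}\subseteq\mathcal{A}\times\mathcal{A}$ be any relation satisfying: (i) $(x,y)\in\mathcal{R}\iff(y,x)\in\mathcal{R}$; (ii) $(x,y)\in\mathcal{R}\Rightarrow x\neq y$; (iii) for all $x\neq z$, if $(x,y)\in\mathcal{R}$ and $(y,z)\in\mathcal{R}$ then $(x,z)\notin\mathcal{R}$. Then every shape (with respect to $H$ and $\mathcal{R}$) is a bipartite graph. (b) Let $\mathcal{R}^\dagger$ be the symmetric relation whose related pairs are exactly $\{\mathbf{A},\mathbf{B}\}$, $\{\mathbf{B},\mathbf{D}\}$, $\{\mathbf{D},\mathbf{C}\}$ (i.e. $(x,y)\in\mathcal{R}^\dagger$ iff $\{x,y\}$ is one of these three sets). For every subset $M\subseteq\{1,\dots,n\}$ such that the graph $H'$ on $\{1,\dots,n\}$ with edge set $E_{H'}=\{\{i,j\}\in E_H: i,j\in M\}$ is bipartite, the graph $H'$ is a shape with respect to $H$ and $\mathcal{R}^\dagger$. (c) Let $\mathcal{H}$ be the following base graph on $\{1,\dots,n\}$: if $n$ is even, $\mathcal{H}$ has edges $\{\sigma(i),\sigma(i+1)\}$, $i=1,\dots,n$ (indices modulo $n$), for some permutation $\sigma$ of $\{1,\dots,n\}$ (a Hamiltonian cycle); if $n$ is odd, fix a vertex $u$ and a bijection $\sigma$ from $\{1,\dots,n-1\}$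 onto $\{1,\dots,n\}\setminus\{u\}$, and let $\mathcal{H}$ have edges $\{\sigma(i),\sigma(i+1)\}$, $i=1,\dots,n-1$ (indices modulo $n-1$), with $u$ isolated. Then every spanning subgraph $H'$ of $\mathcal{H}$ (vertex set $\{1,\dots,n\}$, edge set any subset of $E_{\mathcal{H}}$) is a shape with respect to $\mathcal{H}$ and $\mathcal{R}^\dagger$.
   Context: Sequences are elements $v=(x_1,\dots,x_n)\in\mathcal{A}^n$; the set $\mathcal{A}^n$ is viewed as the graph $Q_4^n$ in which two sequences are adjacent iff they differ in exactly one coordinate. Given a base graph $H$ on $\{1,\dots,n\}$ and a relation $\mathcal{R}\subseteq\mathcal{A}\times\mathcal{A}$, the shape of a sequence $v=(x_1,\dots,x_n)$ is the graph $H_{\mathcal{R}}(v)$ with vertex set $\{1,\dots,n\}$ and edge set $\{\{i,k\}\in E_H : (x_i,x_k)\in\mathcal{R}\}$. A graph $S$ on $\{1,\dots,n\}$ is called a shape (with respect to $H,\mathcal{R}$) if $S=H_{\mathcal{R}}(v)$ for some sequence $v\in\mathcal{A}^n$. *)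

theory Defs
  imports Main
begin

datatype letter = LA | LB | LC | LD

text \<open>A graph on the vertex set {1..n} is represented by its edge set,
  a set of 2-element subsets of {1..n}.\<close>
definition simple_graph :: "nat \<Rightarrow> nat set set \<Rightarrow> bool" where
  "simple_graph n E \<longleftrightarrow>
     (\<forall>e\<in>E. \<exists>i j. i \<in> {1..n} \<and> j \<in> {1..n} \<and> i \<noteq> j \<and> e = {i, j})"

definition bipartite :: "nat \<Rightarrow> nat set set \<Rightarrow> bool" where
  "bipartite n E \<longleftrightarrow>
     (\<exists>X. X \<subseteq> {1..n} \<and> (\<forall>e\<in>E. \<exists>i j. e = {i, j} \<and> i \<in> X \<and> j \<notin> X))"

definition shape :: "nat set set \<Rightarrow> (letter \<times> letter) set \<Rightarrow> (nat \<Rightarrow> letter) \<Rightarrow> nat set set" where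
  "shape H R v = {e \<in> H. \<exists>i k. e = {i, k} \<and> (v i, v k) \<in> R}"

definition is_shape :: "nat set set \<Rightarrow> (letter \<times> letter) set \<Rightarrow> nat set set \<Rightarrow> bool" where
  "is_shape H R S \<longleftrightarrow> (\<exists>v. S = shape H R v)"

definition Rdag :: "(letter \<times> letter) set" where
  "Rdag = {(LA, LB), (LB, LA), (LB, LD), (LD, LB), (LD, LC), (LC, LD)}"

definition induced_edges :: "nat set set \<Rightarrow> nat set \<Rightarrow> nat set set" where
  "induced_edges H M = {e \<in> H. e \<subseteq> M}"

definition special_base :: "nat \<Rightarrow> nat set set \<Rightarrow> bool" where
  "special_base n HH \<longleftrightarrow>
     (even n \<and> (\<exists>\<sigma>. bij_betw \<sigma> {1..n} {1..n} \<and>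
        HH = {{\<sigma> i, \<sigma> (i mod n + 1)} | i. i \<in> {1..n}}))
   \<or> (odd n \<and> (\<exists>u \<sigma>. u \<in> {1..n} \<and> bij_betw \<sigma> {1..n-1} ({1..n} - {u}) \<and>
        HH = {{\<sigma> i, \<sigma> (i mod (n-1) + 1)} | i. i \<in> {1..n-1}}))"

end

theory Submission
  imports Defs
begin

text \<open>
  (a) A symmetric, irreflexive, triangle-free relation on four letters is a bipartite graph, and
  colouring each position by the side of its letter two-colours every shape.

  (b) \<open>Rdag\<close> is the path \<open>A - B - D - C\<close>. Writing \<open>A\<close>/\<open>B\<close> on the two sides of \<open>M\<close> and \<open>C\<close>
  outside \<open>M\<close> realises exactly the edges inside \<open>M\<close>.

  (c) Read the base graph as an \<open>m\<close>-cycle with \<open>m\<close> even and mark the chosen edges. Walking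
  around the cycle and switching between \<open>A\<close> and \<open>B\<close> exactly at marked edges closes up when
  the number of marked edges is even, in particular when the marking is constant. Otherwise
  start the walk just after an unmarked edge that is followed by a marked one. If the count
  is odd, write \<open>C, D\<close> across that marked edge and continue with \<open>A\<close>/\<open>B\<close>; the parity
  makes the walk end on \<open>A\<close>, which is unrelated to the initial \<open>C\<close>.
\<close>

definition count_below :: "(nat \<Rightarrow> bool) \<Rightarrow> nat \<Rightarrow> nat" where
  "count_below b i = card {j. j < i \<and> b j}"

lemma count_below_0 [simp]: "count_below b 0 = 0"
  by (simp add: count_below_def)

lemma count_below_Suc [simp]:
  "count_below b (Suc i) = count_below b i + (if b i then 1 else 0)"
proof -
  have "{j. j < Suc i \<and> b j} = {j. j < i \<and> b j} \<union> (if b i then {i} else {})"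
    by (auto simp: less_Suc_eq)
  then show ?thesis
    unfolding count_below_def by auto
qed

definition cycle_labelling :: "nat \<Rightarrow> (nat \<Rightarrow> bool) \<Rightarrow> (nat \<Rightarrow> letter) \<Rightarrow> bool" where
  "cycle_labelling m b f \<longleftrightarrow> (\<forall>j<m. (f j, f (Suc j mod m)) \<in> Rdag \<longleftrightarrow> b j)"

lemma Rdag_sym: "(x, y) \<in> Rdag \<longleftrightarrow> (y, x) \<in> Rdag"
  by (auto simp: Rdag_def)

lemma cycle_labelling_even_count:
  assumes "even (count_below b m)"
  shows "cycle_labelling m b (\<lambda>i. if even (count_below b i) then LA else LB)"
  unfolding cycle_labelling_def
proof (intro allI impI)
  fix j assume "j < m"
  then consider "Suc j < m" | "m = Suc j"
    by linarith
  then show "((if even (count_below b j) then LA else LB),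
              (if even (count_below b (Suc j mod m)) then LA else LB)) \<in> Rdag \<longleftrightarrow> b j"
    by cases (use assms in \<open>auto simp: Rdag_def\<close>)
qed

lemma cycle_labelling_odd_count:
  assumes "odd (count_below b m)" and "b 0" and "\<not> b (m - 1)" and "3 \<le> m"
  shows "cycle_labelling m b
           (\<lambda>i. if i = 0 then LC else if i = 1 then LD
                else if odd (count_below b i) then LA else LB)"
  unfolding cycle_labelling_def
proof (intro allI impI)
  fix j assume "j < m"
  have "count_below b 1 = 1"
    using \<open>b 0\<close> by (simp add: One_nat_def)
  from \<open>j < m\<close> consider "Suc j < m" | "m = Suc j"
    by linarith
  then show "(if j = 0 then LC else if j = 1 then LD
              else if odd (count_below b j) then LA else LB,
              if Suc j mod m = 0 then LC else if Suc j mod m = 1 then LD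
              else if odd (count_below b (Suc j mod m)) then LA else LB) \<in> Rdag \<longleftrightarrow> b j"
  proof cases
    case 1
    with \<open>count_below b 1 = 1\<close> \<open>b 0\<close> show ?thesis
      by (auto simp: Rdag_def)
  next
    case 2
    with assms have "odd (count_below b j)" "\<not> b j" "2 \<le> j"
      by auto
    with 2 show ?thesis
      by (auto simp: Rdag_def)
  qed
qed

lemma cycle_labelling_rotate:
  assumes "s \<le> m" and "cycle_labelling m (\<lambda>j. b ((j + s) mod m)) f"
  shows "cycle_labelling m b (\<lambda>i. f ((i + (m - s)) mod m))"
  unfolding cycle_labelling_def
proof (intro allI impI)
  fix j assume "j < m"
  define j' where "j' = (j + (m - s)) mod m"
  have "j' < m"
    using \<open>j < m\<close> by (simp add: j'_def)
  have "(j' + s) mod m = (j + m) mod m"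
    using \<open>s \<le> m\<close> by (simp add: j'_def mod_add_left_eq)
  then have "b ((j' + s) mod m) = b j"
    using \<open>j < m\<close> by simp
  moreover have "(Suc j mod m + (m - s)) mod m = Suc j' mod m"
    by (simp add: j'_def mod_add_left_eq mod_Suc_eq)
  ultimately show "(f ((j + (m - s)) mod m), f ((Suc j mod m + (m - s)) mod m)) \<in> Rdag \<longleftrightarrow> b j"
    using assms(2) \<open>j' < m\<close> unfolding cycle_labelling_def j'_def by simp
qed

lemma cyclically_closed_constant:
  assumes "\<forall>k<m. \<not> b k \<longrightarrow> \<not> b (Suc k mod m)" and "j < m" and "\<not> b j" and "i < m"
  shows "\<not> b i"
proof -
  have "\<not> b ((j + t) mod m)" for t
  proof (induction t)
    case 0
    then show ?case using assms by simp
  next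
    case (Suc t)
    have "(j + t) mod m < m"
      using \<open>j < m\<close> by simp
    with Suc.IH assms(1) have "\<not> b (Suc ((j + t) mod m) mod m)"
      by blast
    then show ?case
      by (simp add: mod_Suc_eq)
  qed
  from this[of "i + m - j"] show ?thesis
    using assms by simp
qed

lemma cycle_labelling_exists:
  \<comment> \<open>for \<open>m = 2\<close> both indices denote the same edge of the cycle\<close>
  assumes "even m" and "m = 2 \<longrightarrow> b 0 = b 1"
  shows "\<exists>f. cycle_labelling m b f"
proof (cases "\<exists>k<m. \<not> b k \<and> b (Suc k mod m)")
  case False
  then have "\<forall>k<m. \<not> b k \<longrightarrow> \<not> b (Suc k mod m)"
    by blast
  then have "(\<forall>j<m. b j) \<or> (\<forall>j<m. \<not> b j)"
    using cyclically_closed_constant by blast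
  then have "{j. j < m \<and> b j} = {..<m} \<or> {j. j < m \<and> b j} = {}"
    by auto
  then have "count_below b m = m \<or> count_below b m = 0"
    unfolding count_below_def by (metis card.empty card_lessThan)
  then show ?thesis
    using cycle_labelling_even_count[of b m] \<open>even m\<close> by auto
next
  case True
  then obtain k where k: "k < m" "\<not> b k" "b (Suc k mod m)"
    by blast
  define b' where "b' j = b ((j + Suc k) mod m)" for j
  have "b' 0" "\<not> b' (m - 1)"
    using k by (simp_all add: b'_def)
  moreover have "3 \<le> m"
  proof -
    have "m \<noteq> 2"
      using k assms(2) by (auto simp: less_2_cases_iff)
    then show ?thesis
      using k \<open>even m\<close> by presburger
  qed
  ultimately obtain f where "cycle_labelling m b' f"
    using cycle_labelling_even_count[of b' m] cycle_labelling_odd_count[of b' m] by blast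
  then have "cycle_labelling m b (\<lambda>i. f ((i + (m - Suc k)) mod m))"
    using k cycle_labelling_rotate[of "Suc k" m b f] unfolding b'_def[abs_def] by simp
  then show ?thesis by blast
qed

lemma cycle_subgraph_is_shape:
  fixes \<sigma> :: "nat \<Rightarrow> nat"
  assumes "even m" and "inj_on \<sigma> {1..m}"
    and HH: "HH = {{\<sigma> i, \<sigma> (i mod m + 1)} | i. i \<in> {1..m}}" and "E' \<subseteq> HH"
  shows "is_shape HH Rdag E'"
proof -
  define edge where "edge j = {\<sigma> (Suc j), \<sigma> (Suc (Suc j mod m))}" for j
  have HH_edge: "HH = edge ` {..<m}"
    unfolding HH Setcompr_eq_image image_Suc_lessThan[symmetric] image_image edge_def by simp
  define b where "b j \<longleftrightarrow> edge j \<in> E'" for j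
  have "m = 2 \<longrightarrow> b 0 = b 1"
    by (auto simp: b_def edge_def insert_commute)
  then obtain f where f: "cycle_labelling m b f"
    using cycle_labelling_exists \<open>even m\<close> by blast
  define v where "v x = f (the_inv_into {1..m} \<sigma> x - 1)" for x
  have v: "v (\<sigma> (Suc j)) = f j" if "j < m" for j
    using that the_inv_into_f_f[OF \<open>inj_on \<sigma> {1..m}\<close>, of "Suc j"] by (simp add: v_def)
  have edge_label: "(v x, v y) \<in> Rdag \<longleftrightarrow> edge j \<in> E'" if "{x, y} = edge j" and "j < m" for x y j
  proof -
    have "(v (\<sigma> (Suc j)), v (\<sigma> (Suc (Suc j mod m)))) \<in> Rdag \<longleftrightarrow> b j"
      using f \<open>j < m\<close> v[of j] v[of "Suc j mod m"] by (simp add: cycle_labelling_def)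
    then show ?thesis
      using that(1) by (auto simp: b_def edge_def doubleton_eq_iff Rdag_sym)
  qed
  have "E' = shape HH Rdag v"
  proof (intro set_eqI iffI)
    fix e assume "e \<in> E'"
    with \<open>E' \<subseteq> HH\<close> obtain j where "j < m" "e = edge j" "e \<in> HH"
      unfolding HH_edge by blast
    with \<open>e \<in> E'\<close> edge_label[of "\<sigma> (Suc j)" "\<sigma> (Suc (Suc j mod m))" j] show "e \<in> shape HH Rdag v"
      unfolding shape_def edge_def by blast
  next
    fix e assume "e \<in> shape HH Rdag v"
    then obtain x y j where "j < m" "e = edge j" "e = {x, y}" "(v x, v y) \<in> Rdag"
      unfolding shape_def HH_edge by blast
    with edge_label show "e \<in> E'"
      by metis
  qed
  then show ?thesis
    unfolding is_shape_def by blast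
qed

lemma letter_relation_two_colourable:
  fixes R :: "(letter \<times> letter) set"
  assumes sym: "\<forall>x y. (x, y) \<in> R \<longleftrightarrow> (y, x) \<in> R"
    and irrefl: "\<forall>x y. (x, y) \<in> R \<longrightarrow> x \<noteq> y"
    and triangle_free: "\<forall>x y z. x \<noteq> z \<and> (x, y) \<in> R \<and> (y, z) \<in> R \<longrightarrow> (x, z) \<notin> R"
  shows "\<exists>P. \<forall>x y. (x, y) \<in> R \<longrightarrow> (x \<in> P \<longleftrightarrow> y \<notin> P)"
proof -
  have all_letter: "(\<forall>x. Q x) \<longleftrightarrow> Q LA \<and> Q LB \<and> Q LC \<and> Q LD" for Q
    by (metis letter.exhaust)
  have s: "(LB,LA)\<in>R \<longleftrightarrow> (LA,LB)\<in>R" "(LC,LA)\<in>R \<longleftrightarrow> (LA,LC)\<in>R" "(LD,LA)\<in>R \<longleftrightarrow> (LA,LD)\<in>R"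
    "(LC,LB)\<in>R \<longleftrightarrow> (LB,LC)\<in>R" "(LD,LB)\<in>R \<longleftrightarrow> (LB,LD)\<in>R" "(LD,LC)\<in>R \<longleftrightarrow> (LC,LD)\<in>R"
    using sym by blast+
  have i: "(LA,LA)\<notin>R" "(LB,LB)\<notin>R" "(LC,LC)\<notin>R" "(LD,LD)\<notin>R"
    using irrefl by blast+
  have t: "\<not> ((LA,LB)\<in>R \<and> (LB,LC)\<in>R \<and> (LA,LC)\<in>R)"
    "\<not> ((LA,LB)\<in>R \<and> (LB,LD)\<in>R \<and> (LA,LD)\<in>R)"
    "\<not> ((LA,LC)\<in>R \<and> (LC,LD)\<in>R \<and> (LA,LD)\<in>R)"
    "\<not> ((LB,LC)\<in>R \<and> (LC,LD)\<in>R \<and> (LB,LD)\<in>R)"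
    using triangle_free by blast+
  define colour where "colour a b c d = {z. case z of LA \<Rightarrow> a | LB \<Rightarrow> b | LC \<Rightarrow> c | LD \<Rightarrow> d}"
    for a b c d :: bool
  \<comment> \<open>a finite check over the \<open>2^6\<close> possible relations\<close>
  have "\<exists>a b c d. \<forall>x y. (x, y) \<in> R \<longrightarrow> (x \<in> colour a b c d \<longleftrightarrow> y \<notin> colour a b c d)"
    unfolding all_letter colour_def
    apply (simp only: s i mem_Collect_eq letter.case simp_thms ex_bool_eq)
    apply (cases "(LA,LB)\<in>R"; cases "(LA,LC)\<in>R"; cases "(LA,LD)\<in>R";
           cases "(LB,LC)\<in>R"; cases "(LB,LD)\<in>R"; cases "(LC,LD)\<in>R")
    using t by simp_all
  then show ?thesis
    by blast
qed

lemma shape_bipartite: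
  assumes "simple_graph n H" and P: "\<forall>x y. (x, y) \<in> R \<longrightarrow> (x \<in> P \<longleftrightarrow> y \<notin> P)"
  shows "bipartite n (shape H R v)"
proof -
  define X where "X = {i \<in> {1..n}. v i \<in> P}"
  have "\<exists>i j. e = {i, j} \<and> i \<in> X \<and> j \<notin> X" if "e \<in> shape H R v" for e
  proof -
    from that obtain i k where "e \<in> H" "e = {i, k}" "(v i, v k) \<in> R"
      unfolding shape_def by blast
    moreover from \<open>e \<in> H\<close> \<open>e = {i, k}\<close> \<open>simple_graph n H\<close> have "i \<in> {1..n}" "k \<in> {1..n}"
      unfolding simple_graph_def by (auto simp: doubleton_eq_iff)
    ultimately show ?thesis
      using P by (cases "v i \<in> P") (auto simp: X_def insert_commute)
  qed
  moreover have "X \<subseteq> {1..n}"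
    unfolding X_def by blast
  ultimately show ?thesis
    unfolding bipartite_def by blast
qed

lemma induced_bipartite_is_shape:
  assumes "bipartite n (induced_edges H M)"
  shows "is_shape H Rdag (induced_edges H M)"
proof -
  obtain X where X: "\<forall>e\<in>induced_edges H M. \<exists>i j. e = {i, j} \<and> i \<in> X \<and> j \<notin> X"
    using assms unfolding bipartite_def by blast
  define v where "v i = (if i \<in> M then if i \<in> X then LA else LB else LC)" for i
  have "induced_edges H M = shape H Rdag v"
  proof (intro set_eqI iffI)
    fix e assume e: "e \<in> induced_edges H M"
    then obtain i j where "e = {i, j}" "i \<in> X" "j \<notin> X"
      using X by blast
    with e show "e \<in> shape H Rdag v"
      by (auto simp: induced_edges_def shape_def v_def Rdag_def)
  next
    fix e assume "e \<in> shape H Rdag v"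
    then obtain i k where "e \<in> H" "e = {i, k}" "(v i, v k) \<in> Rdag"
      unfolding shape_def by blast
    \<comment> \<open>\<open>C\<close> is related only to \<open>D\<close>, which \<open>v\<close> never uses\<close>
    then show "e \<in> induced_edges H M"
      by (auto simp: induced_edges_def v_def Rdag_def split: if_splits)
  qed
  then show ?thesis
    unfolding is_shape_def by blast
qed

lemma special_base_even_cycle:
  assumes "special_base n HH" and "n \<ge> 1"
  shows "\<exists>(m :: nat) (\<sigma> :: nat \<Rightarrow> nat). even m \<and> inj_on \<sigma> {1..m} \<and> HH = {{\<sigma> i, \<sigma> (i mod m + 1)} | i. i \<in> {1..m}}"
proof (cases "even n")
  case True
  with assms obtain \<sigma> where "bij_betw \<sigma> {1..n} {1..n}"
    and "HH = {{\<sigma> i, \<sigma> (i mod n + 1)} | i. i \<in> {1..n}}"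
    unfolding special_base_def by blast
  with True show ?thesis
    using bij_betw_imp_inj_on by blast
next
  case False
  with assms obtain u \<sigma> where "bij_betw \<sigma> {1..n-1} ({1..n} - {u})"
    and "HH = {{\<sigma> i, \<sigma> (i mod (n-1) + 1)} | i. i \<in> {1..n-1}}"
    unfolding special_base_def by blast
  moreover from False \<open>n \<ge> 1\<close> have "even (n - 1)"
    by simp
  ultimately show ?thesis
    using bij_betw_imp_inj_on by blast
qed

theorem lemma1:
  fixes n :: nat and H :: "nat set set"
  assumes "n \<ge> 1" and "simple_graph n H"
  shows "(\<forall>R :: (letter \<times> letter) set.
            (\<forall>x y. (x, y) \<in> R \<longleftrightarrow> (y, x) \<in> R) \<and>
            (\<forall>x y. (x, y) \<in> R \<longrightarrow> x \<noteq> y) \<and>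
            (\<forall>x y z. x \<noteq> z \<and> (x, y) \<in> R \<and> (y, z) \<in> R \<longrightarrow> (x, z) \<notin> R)
            \<longrightarrow> (\<forall>S. is_shape H R S \<longrightarrow> bipartite n S))
       \<and> (\<forall>M. M \<subseteq> {1..n} \<and> bipartite n (induced_edges H M)
              \<longrightarrow> is_shape H Rdag (induced_edges H M))
       \<and> (\<forall>HH. special_base n HH \<longrightarrow> (\<forall>E'. E' \<subseteq> HH \<longrightarrow> is_shape HH Rdag E'))"
proof (intro conjI allI impI)
  fix R :: "(letter \<times> letter) set" and S
  assume "(\<forall>x y. (x, y) \<in> R \<longleftrightarrow> (y, x) \<in> R) \<and> (\<forall>x y. (x, y) \<in> R \<longrightarrow> x \<noteq> y) \<and>
          (\<forall>x y z. x \<noteq> z \<and> (x, y) \<in> R \<and> (y, z) \<in> R \<longrightarrow> (x, z) \<notin> R)"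
  then have "\<exists>P. \<forall>x y. (x, y) \<in> R \<longrightarrow> (x \<in> P \<longleftrightarrow> y \<notin> P)"
    by (elim conjE) (rule letter_relation_two_colourable; assumption)
  then obtain P where "\<forall>x y. (x, y) \<in> R \<longrightarrow> (x \<in> P \<longleftrightarrow> y \<notin> P)"
    ..
  moreover assume "is_shape H R S"
  then obtain v where "S = shape H R v"
    unfolding is_shape_def ..
  ultimately show "bipartite n S"
    using shape_bipartite[OF \<open>simple_graph n H\<close>] by simp
next
  fix M assume "M \<subseteq> {1..n} \<and> bipartite n (induced_edges H M)"
  then show "is_shape H Rdag (induced_edges H M)"
    using induced_bipartite_is_shape[of n H M] by simp
next
  fix HH E' assume "special_base n HH" and "E' \<subseteq> HH"
  obtain m :: nat and \<sigma> :: "nat \<Rightarrow> nat" where "even m" "inj_on \<sigma> {1..m}"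
    "HH = {{\<sigma> i, \<sigma> (i mod m + 1)} | i. i \<in> {1..m}}"
    using special_base_even_cycle[OF \<open>special_base n HH\<close> \<open>n \<ge> 1\<close>] by blast
  with \<open>E' \<subseteq> HH\<close> show "is_shape HH Rdag E'"
    using cycle_subgraph_is_shape by blast
qed

end
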